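(* For $0\le r_1,r_2\le n$, $0\le s\le N(r_1,r_2)$ and all $t\in\mathbb C$, $$\lambda_s^{r_1,r_2}(t)=\binom{r_2}{s}^{-1}\sum_{j=0}^s\binom{t}{j}\binom{r_2-t}{s-j}\lambda_s^{r_1,s}(j),\qquad\text{where}\quad \lambda_s^{r_1,s}(j)=(-1)^j\frac{(r_1-s+1)_j}{[n-r_1]_j}.$$
   Context: Let $\Omega$ be a finite set with $|\Omega|=n\ge1$, $G=S(\Omega)$, $X=\mathcal P(\Omega)$, $X_r=\{x\in X:|x|=r\}$, $G$ acting on $L^2(X)$ (complex functions on $X$; $L^2(X_r)$ = functions supported on $X_r$) by $(\rho(g)\psi)(x)=\psi(g^{-1}x)$. For $0\le s\le\min(r,n-r)$, $L^2(X_r)_s$ is the unique irreducible $G$-subspace of $L^2(X_r)$ isomorphic to the irreducible representation associated with the partition $(n-s,s)$. $N(r_1,r_2)=\min(r_1,n-r_1,r_2,n-r_2)$. For $0\le s\le N(r_1,r_2)$, $\Lambda_s^{r_1,r_2}$ is a $G$-equivariant map $L^2(X)\to L^2(X)$ sending $L^2(X_{r_1})_s$ into $L^2(X_{r_2})_s$ and vanishing on its orthogonal complement, with kernel $\lambda$ defined on integers $\max(0,r_2-r_1)\le k\le\min(n-r_1,r_2)$ by $(\Lambda_s^{r_1,r_2}\psi)(x_2)=\sum_{x_1\in X_{r_1}}\lambda(|x_2\setminus x_1|)\psi(x_1)$. The kernel agrees on its domain with a unique polynomial of degree $s$ which is nonzero at $0$; $\Lambda_s^{r_1,r_2}$ is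 normalized so that this polynomial takes the value $1$ at $t=0$, and $\lambda_s^{r_1,r_2}(t)$, $t\in\mathbb C$, denotes this polynomial. Binomials $\binom{t}{j}=[t]_j/j!$ for complex $t$; $[\alpha]_k=\alpha(\alpha-1)\cdots(\alpha-k+1)$, $(\alpha)_k=\alpha(\alpha+1)\cdots(\alpha+k-1)$. *)

theory Defs
  imports "HOL-Computational_Algebra.Polynomial" Complex_Main
begin

text \<open>Omega = {..<n}. Functions on X = Pow Omega are functions nat set => complex.\<close>

definition Xr :: "nat \<Rightarrow> nat \<Rightarrow> nat set set" where
  "Xr n r = {x. x \<subseteq> {..<n} \<and> card x = r}"

definition L2r :: "nat \<Rightarrow> nat \<Rightarrow> (nat set \<Rightarrow> complex) set" where
  "L2r n r = {\<psi>. \<forall>x. x \<notin> Xr n r \<longrightarrow> \<psi> x = 0}"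

definition inner_r :: "nat \<Rightarrow> nat \<Rightarrow> (nat set \<Rightarrow> complex) \<Rightarrow> (nat set \<Rightarrow> complex) \<Rightarrow> complex" where
  "inner_r n r \<psi> \<chi> = (\<Sum>x\<in>Xr n r. \<psi> x * cnj (\<chi> x))"

definition up_op :: "nat \<Rightarrow> nat \<Rightarrow> nat \<Rightarrow> (nat set \<Rightarrow> complex) \<Rightarrow> (nat set \<Rightarrow> complex)" where
  "up_op n s r \<phi> = (\<lambda>x. if x \<in> Xr n r then (\<Sum>y\<in>{y. y \<subseteq> x \<and> card y = s}. \<phi> y) else 0)"

definition Mr :: "nat \<Rightarrow> nat \<Rightarrow> nat \<Rightarrow> (nat set \<Rightarrow> complex) set" where
  "Mr n r s = up_op n s r ` L2r n s"

text \<open>L^2(X_r)_s: the copy of the Specht module S^(n-s,s) inside L^2(X_r),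
  realised as the orthogonal complement of M_{s-1} in M_s.\<close>
definition Vr :: "nat \<Rightarrow> nat \<Rightarrow> nat \<Rightarrow> (nat set \<Rightarrow> complex) set" where
  "Vr n r s = (if s = 0 then Mr n r 0
     else {\<psi> \<in> Mr n r s. \<forall>\<chi>\<in>Mr n r (s - 1). inner_r n r \<psi> \<chi> = 0})"

definition kernel_op :: "nat \<Rightarrow> nat \<Rightarrow> nat \<Rightarrow> (nat \<Rightarrow> complex) \<Rightarrow> (nat set \<Rightarrow> complex) \<Rightarrow> (nat set \<Rightarrow> complex)" where
  "kernel_op n r1 r2 ker \<psi> = (\<lambda>x2. if x2 \<in> Xr n r2
      then (\<Sum>x1\<in>Xr n r1. ker (card (x2 - x1)) * \<psi> x1) else 0)"

definition kernel_ok :: "nat \<Rightarrow> nat \<Rightarrow> nat \<Rightarrow> nat \<Rightarrow> (nat \<Rightarrow> complex) \<Rightarrow> bool" where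
  "kernel_ok n r1 r2 s ker \<longleftrightarrow>
     (\<forall>\<psi>\<in>Vr n r1 s. kernel_op n r1 r2 ker \<psi> \<in> Vr n r2 s) \<and>
     (\<forall>\<psi>\<in>L2r n r1. (\<forall>\<phi>\<in>Vr n r1 s. inner_r n r1 \<psi> \<phi> = 0) \<longrightarrow>
         kernel_op n r1 r2 ker \<psi> = (\<lambda>_. 0))"

definition Nfun :: "nat \<Rightarrow> nat \<Rightarrow> nat \<Rightarrow> nat" where
  "Nfun n r1 r2 = min (min r1 (n - r1)) (min r2 (n - r2))"

definition kdom :: "nat \<Rightarrow> nat \<Rightarrow> nat \<Rightarrow> nat set" where
  "kdom n r1 r2 = {r2 - r1 .. min (n - r1) r2}"

definition lambda_poly :: "nat \<Rightarrow> nat \<Rightarrow> nat \<Rightarrow> nat \<Rightarrow> complex poly" where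
  "lambda_poly n r1 r2 s = (THE p. degree p = s \<and> poly p 0 = 1 \<and>
     (\<exists>ker. kernel_ok n r1 r2 s ker \<and> (\<forall>k\<in>kdom n r1 r2. ker k = poly p (of_nat k))))"

definition lam :: "nat \<Rightarrow> nat \<Rightarrow> nat \<Rightarrow> nat \<Rightarrow> complex \<Rightarrow> complex" where
  "lam n r1 r2 s t = poly (lambda_poly n r1 r2 s) t"

definition falling :: "complex \<Rightarrow> nat \<Rightarrow> complex" where
  "falling a k = (\<Prod>i<k. a - of_nat i)"

end

(* The candidate is the composite of two operators.  Let T go from level r1 to level s with
   kernel mu(|y - x1|), where mu(j) = (-1)^j (r1-s+1)_j / [n-r1]_j.  The two-term recurrence
   (r1-s+1+m) mu(m) + (n-r1-m) mu(m+1) = 0 makes every superset sum of a column of T vanish,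
   so T maps into V_s^s; by double counting the same holds for the rows, so the rows lie in
   V_r1^s and T annihilates the orthogonal complement of V_r1^s.  The inclusion operator from
   level s to level r2 maps V_s^s into V_r2^s, and the composite has kernel
   sum_j C(t,j) C(r2-t,s-j) mu(j) at t = |x2 - x1|, which after normalisation is the
   polynomial of the theorem: degree s and value 1 at 0.
   Uniqueness: if p is another admissible polynomial, a suitable p - c P has degree below s,
   so x1 |-> g(|x2 - x1|) lies in M_r1^(s-1), which is orthogonal to V_r1^s.  Applying both
   operators to its conjugate gives sum |g|^2 = 0, and g vanishes at more than s points. *)

theory Submission
  imports Defs
begin

section \<open>Counting supersets\<close>

lemma card_supersets_split:
  assumes A: "finite A" and zA: "z \<subseteq> A" and BA: "B \<subseteq> A" and bc: "b \<le> c"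
  shows "card {x. z \<subseteq> x \<and> x \<subseteq> A \<and> card x = card z + c \<and> card ((x - z) \<inter> B) = b}
       = (card (B - z) choose b) * (card (A - z - B) choose (c - b))"
proof -
  let ?S = "{x. z \<subseteq> x \<and> x \<subseteq> A \<and> card x = card z + c \<and> card ((x - z) \<inter> B) = b}"
  let ?U = "{u. u \<subseteq> B - z \<and> card u = b}"
  let ?V = "{v. v \<subseteq> A - z - B \<and> card v = c - b}"
  let ?f = "\<lambda>(u, v). z \<union> u \<union> v"
  have fin: "finite z" "finite (B - z)" "finite (A - z - B)"
    using A zA BA by (auto intro: finite_subset)
  have inj: "inj_on ?f (?U \<times> ?V)"
  proof (rule inj_onI, clarsimp)
    fix u v u' v'
    assume "u \<subseteq> B - z" "v \<subseteq> A - z - B" "u' \<subseteq> B - z" "v' \<subseteq> A - z - B"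
      and eq: "z \<union> u \<union> v = z \<union> u' \<union> v'"
    then have "u = (z \<union> u \<union> v) \<inter> B - z" "u' = (z \<union> u' \<union> v') \<inter> B - z"
      and "v = (z \<union> u \<union> v) - B - z" "v' = (z \<union> u' \<union> v') - B - z" by blast+
    then show "u = u' \<and> v = v'" unfolding eq by simp
  qed
  have card_x: "card x = card z + card ((x - z) \<inter> B) + card (x - z - B)" if "z \<subseteq> x" "x \<subseteq> A" for x
  proof -
    have "finite x" using that A finite_subset by blast
    then show ?thesis
      using that fin card_Int_Diff[of "x - z" B] card_Diff_subset[of z x] card_mono[of x z] by simp
  qed
  have "?S = ?f ` (?U \<times> ?V)"
  proof (intro set_eqI iffI)
    fix x assume x: "x \<in> ?S"
    then have "((x - z) \<inter> B, x - z - B) \<in> ?U \<times> ?V" and "x = ?f ((x - z) \<inter> B, x - z - B)"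
      using card_x[of x] by auto
    then show "x \<in> ?f ` (?U \<times> ?V)" by (rule rev_image_eqI)
  next
    fix x assume "x \<in> ?f ` (?U \<times> ?V)"
    then obtain u v where uv: "u \<subseteq> B - z" "card u = b" "v \<subseteq> A - z - B" "card v = c - b"
      and x: "x = z \<union> u \<union> v" by auto
    then have "(x - z) \<inter> B = u" and "x - z - B = v" and "z \<subseteq> x" and "x \<subseteq> A"
      using BA zA by blast+
    then show "x \<in> ?S" using card_x[of x] uv bc by auto
  qed
  then have "card ?S = card ?U * card ?V"
    by (simp add: card_image[OF inj] card_cartesian_product)
  also have "\<dots> = (card (B - z) choose b) * (card (A - z - B) choose (c - b))"
    using fin by (simp add: n_subsets)
  finally show ?thesis .
qed

lemma card_supersets:
  assumes "finite A" and "z \<subseteq> A"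
  shows "card {x. z \<subseteq> x \<and> x \<subseteq> A \<and> card x = card z + c} = card (A - z) choose c"
  using card_supersets_split[OF assms empty_subsetI, of 0 c] by simp

lemma sum_supersets_split:
  fixes F :: "nat \<Rightarrow> 'a::comm_semiring_1"
  assumes A: "finite A" and zA: "z \<subseteq> A" and BA: "B \<subseteq> A"
  shows "(\<Sum>x | z \<subseteq> x \<and> x \<subseteq> A \<and> card x = card z + c. F (card ((x - z) \<inter> B)))
       = (\<Sum>b\<le>c. of_nat ((card (B - z) choose b) * (card (A - z - B) choose (c - b))) * F b)"
proof -
  let ?S = "{x. z \<subseteq> x \<and> x \<subseteq> A \<and> card x = card z + c}"
  let ?g = "\<lambda>x. card ((x - z) \<inter> B)"
  have fS: "finite ?S" by (rule finite_subset[of _ "Pow A"]) (use A in auto)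
  have "?g x \<le> c" if "x \<in> ?S" for x
  proof -
    have fx: "finite x" using A that by (auto intro: finite_subset)
    have "?g x \<le> card (x - z)" using fx by (intro card_mono) auto
    also have "card (x - z) = c" using that fx A zA by (simp add: card_Diff_subset finite_subset)
    finally show ?thesis .
  qed
  then have "(\<Sum>x\<in>?S. F (?g x)) = (\<Sum>x\<in>?S. \<Sum>b\<le>c. if ?g x = b then F b else 0)"
    by (intro sum.cong) auto
  also have "\<dots> = (\<Sum>b\<le>c. of_nat (card {x\<in>?S. ?g x = b}) * F b)"
    using fS by (subst sum.swap) (simp add: sum.If_cases Collect_conj_eq[symmetric] conj_assoc)
  also have "\<dots> = (\<Sum>b\<le>c. of_nat ((card (B - z) choose b) * (card (A - z - B) choose (c - b))) * F b)"
    using card_supersets_split[OF A zA BA] by (intro sum.cong) (simp_all add: conj_assoc)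
  finally show ?thesis .
qed

section \<open>Expansion in binomial coefficients\<close>

lemma binomial_interpolation:
  fixes w :: "nat \<Rightarrow> 'a::comm_ring_1"
  shows "\<exists>a. \<forall>u\<le>d. w u = (\<Sum>k\<le>d. a k * of_nat (u choose k))"
proof (induction d)
  case 0
  show ?case by (rule exI[of _ "\<lambda>_. w 0"]) simp
next
  case (Suc d)
  then obtain a where a: "\<forall>u\<le>d. w u = (\<Sum>k\<le>d. a k * of_nat (u choose k))" by blast
  define a' where "a' = a(Suc d := w (Suc d) - (\<Sum>k\<le>d. a k * of_nat (Suc d choose k)))"
  have "(\<Sum>k\<le>Suc d. a' k * of_nat (u choose k))
      = (\<Sum>k\<le>d. a k * of_nat (u choose k)) + a' (Suc d) * of_nat (u choose Suc d)" for u
    by (simp add: a'_def)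
  then have "w u = (\<Sum>k\<le>Suc d. a' k * of_nat (u choose k))" if "u \<le> Suc d" for u
    using a that unfolding le_Suc_eq by (auto simp: a'_def binomial_eq_0 less_Suc_eq_le)
  then show ?case by blast
qed

definition gbinomial_poly :: "'a::field_char_0 \<Rightarrow> 'a \<Rightarrow> nat \<Rightarrow> 'a poly" where
  "gbinomial_poly a e k = smult (inverse (fact k)) (\<Prod>i<k. [:a - of_nat i, e:])"

lemma poly_gbinomial_poly: "poly (gbinomial_poly a e k) t = (a + e * t) gchoose k"
  by (simp add: gbinomial_poly_def gbinomial_prod_rev poly_prod atLeast0LessThan field_simps)

lemma degree_gbinomial_poly:
  assumes "e \<noteq> 0"
  shows "degree (gbinomial_poly a e k) = k"
  using assms by (simp add: gbinomial_poly_def degree_prod_eq_sum_degree)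

lemma coeff_gbinomial_poly_self:
  assumes "e \<noteq> 0"
  shows "coeff (gbinomial_poly a e k) k = e ^ k / fact k"
proof -
  have "lead_coeff (\<Prod>i<k. [:a - of_nat i, e:]) = e ^ k"
    using assms by (simp add: lead_coeff_prod)
  then show ?thesis
    using assms by (simp add: gbinomial_poly_def degree_prod_eq_sum_degree field_simps)
qed

lemma poly_eq_0_if_nat_roots:
  fixes p :: "'a::{idom, ring_char_0} poly"
  assumes "finite S" and "degree p < card S" and "\<forall>u\<in>S. poly p (of_nat u) = 0"
  shows "p = 0"
proof (rule ccontr)
  assume p: "p \<noteq> 0"
  have "card S = card (of_nat ` S :: 'a set)"
    by (simp add: card_image inj_on_def)
  also have "\<dots> \<le> card {x. poly p x = 0}"
    using assms(3) by (intro card_mono poly_roots_finite p) auto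
  also have "\<dots> \<le> degree p" by (rule card_poly_roots_bound[OF p])
  finally show False using assms(2) by simp
qed

lemma gbinomial_expansion:
  fixes q :: "'a::field_char_0 poly"
  assumes "degree q \<le> d"
  shows "\<exists>a. \<forall>x. poly q x = (\<Sum>k\<le>d. a k * (x gchoose k))"
proof -
  obtain a where a: "\<forall>u\<le>d. poly q (of_nat u) = (\<Sum>k\<le>d. a k * of_nat (u choose k))"
    using binomial_interpolation[where w = "\<lambda>u. poly q (of_nat u)" and d = d] by blast
  define Q where "Q = (\<Sum>k\<le>d. smult (a k) (gbinomial_poly 0 1 k))"
  have poly_Q: "poly Q x = (\<Sum>k\<le>d. a k * (x gchoose k))" for x
    by (simp add: Q_def poly_sum poly_gbinomial_poly)
  have "degree Q \<le> d" unfolding Q_def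
    by (intro degree_sum_le) (auto intro: order.trans[OF degree_smult_le] simp: degree_gbinomial_poly)
  then have "q - Q = 0"
    using assms a by (intro poly_eq_0_if_nat_roots[of "{..d}"])
      (auto simp: poly_Q binomial_gbinomial intro: le_less_trans[OF degree_diff_le])
  then show ?thesis using poly_Q by auto
qed

section \<open>Fixed-size subsets of {..<n} and the spaces M and V\<close>

lemma XrD:
  assumes "x \<in> Xr n r"
  shows "x \<subseteq> {..<n}" and "finite x" and "card x = r"
  using assms finite_subset[of x "{..<n}"] by (auto simp: Xr_def)

lemma finite_Xr: "finite (Xr n r)"
  by (rule finite_subset[of _ "Pow {..<n}"]) (auto simp: Xr_def)

lemma Xr_supersets_eq:
  assumes "z \<subseteq> {..<n}" and "card z \<le> r"
  shows "{x \<in> Xr n r. z \<subseteq> x} = {x. z \<subseteq> x \<and> x \<subseteq> {..<n} \<and> card x = card z + (r - card z)}"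
  using assms by (auto simp: Xr_def)

lemma card_Xr_supersets:
  assumes z: "z \<subseteq> {..<n}"
  shows "card {x \<in> Xr n r. z \<subseteq> x} = (if card z \<le> r then (n - card z) choose (r - card z) else 0)"
proof (cases "card z \<le> r")
  case True
  have "finite z" using z finite_subset by blast
  then show ?thesis
    unfolding Xr_supersets_eq[OF z True] card_supersets[OF finite_lessThan z]
    using True z by (simp add: card_Diff_subset)
next
  case False
  have none: "{x \<in> Xr n r. z \<subseteq> x} = {}"
    using False card_mono[OF XrD(2)] XrD(3) by fastforce
  show ?thesis unfolding none using False by simp
qed

lemma up_op_eq:
  assumes "x \<in> Xr n r"
  shows "up_op n s r \<phi> x = (\<Sum>y\<in>{y \<in> Xr n s. y \<subseteq> x}. \<phi> y)"
proof -
  have "{y. y \<subseteq> x \<and> card y = s} = {y \<in> Xr n s. y \<subseteq> x}"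
    using assms by (auto simp: Xr_def)
  then show ?thesis using assms by (simp add: up_op_def)
qed

lemma Mr_subset_L2r: "Mr n r s \<subseteq> L2r n r"
  by (auto simp: Mr_def up_op_def L2r_def)

lemma Vr_subset_Mr: "Vr n r s \<subseteq> Mr n r s"
  by (auto simp: Vr_def)

lemma Mr_same_level: "Mr n r r = L2r n r"
proof
  have "up_op n r r \<phi> = \<phi>" if "\<phi> \<in> L2r n r" for \<phi>
  proof
    fix x
    have "{y \<in> Xr n r. y \<subseteq> x} = {x}" if "x \<in> Xr n r"
      using that card_subset_eq[OF XrD(2)[OF that]] by (auto simp: Xr_def)
    then show "up_op n r r \<phi> x = \<phi> x"
      using \<open>\<phi> \<in> L2r n r\<close> by (cases "x \<in> Xr n r") (simp_all add: up_op_eq, simp add: up_op_def L2r_def)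
  qed
  then show "L2r n r \<subseteq> Mr n r r" unfolding Mr_def by (metis image_eqI subsetI)
qed (rule Mr_subset_L2r)

lemma inner_r_commute: "inner_r n r \<psi> \<chi> = cnj (inner_r n r \<chi> \<psi>)"
  by (simp add: inner_r_def mult.commute)

lemma VrI:
  assumes M: "f \<in> Mr n r s"
    and sums: "s > 0 \<Longrightarrow> \<forall>z\<in>Xr n (s - 1). (\<Sum>x\<in>{x \<in> Xr n r. z \<subseteq> x}. f x) = 0"
  shows "f \<in> Vr n r s"
proof (cases "s = 0")
  case False
  have "inner_r n r f \<chi> = 0" if \<chi>M: "\<chi> \<in> Mr n r (s - 1)" for \<chi>
  proof -
    obtain \<chi>0 where \<chi>: "\<chi> = up_op n (s - 1) r \<chi>0"
      using \<chi>M unfolding Mr_def by blast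
    have "inner_r n r f \<chi> = (\<Sum>x\<in>Xr n r. \<Sum>z\<in>{z \<in> Xr n (s - 1). z \<subseteq> x}. f x * cnj (\<chi>0 z))"
      by (simp add: inner_r_def \<chi> up_op_eq sum_distrib_left)
    also have "\<dots> = (\<Sum>z\<in>Xr n (s - 1). cnj (\<chi>0 z) * (\<Sum>x\<in>{x \<in> Xr n r. z \<subseteq> x}. f x))"
      by (subst sum.swap_restrict) (simp_all add: finite_Xr sum_distrib_left mult.commute)
    also have "\<dots> = 0" using sums False by simp
    finally show ?thesis .
  qed
  then show ?thesis using M False by (simp add: Vr_def)
qed (use M in \<open>simp add: Vr_def\<close>)

lemma Vr_superset_sum:
  assumes \<phi>: "\<phi> \<in> Vr n r s" and "s > 0" and z: "z \<in> Xr n (s - 1)"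
  shows "(\<Sum>x\<in>{x \<in> Xr n r. z \<subseteq> x}. \<phi> x) = 0"
proof -
  define \<delta> where "\<delta> = (\<lambda>y. if y = z then (1::complex) else 0)"
  have "up_op n (s - 1) r \<delta> \<in> Mr n r (s - 1)"
    using z by (auto simp: Mr_def L2r_def \<delta>_def)
  then have "inner_r n r \<phi> (up_op n (s - 1) r \<delta>) = 0"
    using \<phi> \<open>s > 0\<close> by (simp add: Vr_def)
  moreover have "up_op n (s - 1) r \<delta> x = (if z \<subseteq> x then 1 else 0)" if "x \<in> Xr n r" for x
    using that z by (simp add: up_op_eq \<delta>_def finite_Xr)
  then have "inner_r n r \<phi> (up_op n (s - 1) r \<delta>) = (\<Sum>x\<in>Xr n r. if z \<subseteq> x then \<phi> x else 0)"
    unfolding inner_r_def by (intro sum.cong) simp_all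
  ultimately show ?thesis by (simp add: sum.inter_filter finite_Xr)
qed

lemma Vr_superset_sum_lower:
  assumes \<phi>: "\<phi> \<in> Vr n r s" and ks: "k < s" and sr: "s \<le> r" and u: "u \<in> Xr n k"
  shows "(\<Sum>y\<in>{y \<in> Xr n r. u \<subseteq> y}. \<phi> y) = 0"
proof -
  let ?Z = "{z \<in> Xr n (s - 1). u \<subseteq> z}" and ?Y = "{y \<in> Xr n r. u \<subseteq> y}"
  have count: "card {z \<in> ?Z. z \<subseteq> y} = (r - k) choose (s - 1 - k)" if y: "y \<in> ?Y" for y
  proof -
    have "{z \<in> ?Z. z \<subseteq> y} = {z. u \<subseteq> z \<and> z \<subseteq> y \<and> card z = card u + (s - 1 - k)}"
      using y ks XrD(3)[OF u] by (auto simp: Xr_def)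
    also have "card \<dots> = card (y - u) choose (s - 1 - k)"
      using y XrD(2)[of y n r] by (intro card_supersets) auto
    finally show ?thesis
      using y XrD(2,3)[OF u] XrD(3)[of y n r] by (simp add: card_Diff_subset)
  qed
  have "(\<Sum>y\<in>{y \<in> ?Y. z \<subseteq> y}. \<phi> y) = 0" if z: "z \<in> ?Z" for z
  proof -
    have "{y \<in> ?Y. z \<subseteq> y} = {y \<in> Xr n r. z \<subseteq> y}" using z by blast
    then show ?thesis using Vr_superset_sum[OF \<phi>] z ks by simp
  qed
  then have "0 = (\<Sum>z\<in>?Z. \<Sum>y\<in>{y \<in> ?Y. z \<subseteq> y}. \<phi> y)" by simp
  also have "\<dots> = (\<Sum>y\<in>?Y. \<Sum>z\<in>{z \<in> ?Z. z \<subseteq> y}. \<phi> y)"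
    by (rule sum.swap_restrict) (simp_all add: finite_Xr)
  also have "\<dots> = (\<Sum>y\<in>?Y. of_nat ((r - k) choose (s - 1 - k)) * \<phi> y)"
    by (intro sum.cong refl) (simp only: sum_constant count)
  also have "\<dots> = of_nat ((r - k) choose (s - 1 - k)) * (\<Sum>y\<in>?Y. \<phi> y)"
    by (simp add: sum_distrib_left)
  finally have "of_nat ((r - k) choose (s - 1 - k)) * (\<Sum>y\<in>?Y. \<phi> y) = 0" ..
  moreover have "(r - k) choose (s - 1 - k) \<noteq> 0" using ks sr by simp
  ultimately show ?thesis by simp
qed

lemma Vr_sum_binomial_Int:
  assumes \<phi>: "\<phi> \<in> Vr n r s" and ks: "k < s" and sr: "s \<le> r" and z: "z \<subseteq> {..<n}"
  shows "(\<Sum>y\<in>Xr n r. of_nat (card (y \<inter> z) choose k) * \<phi> y) = 0"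
proof -
  let ?U = "{u. u \<subseteq> z \<and> card u = k}"
  have fz: "finite z" using finite_subset[OF z] by simp
  have fU: "finite ?U" by (rule finite_subset[of _ "Pow z"]) (use fz in auto)
  have "card (y \<inter> z) choose k = card {u \<in> ?U. u \<subseteq> y}" for y
  proof -
    have "card (y \<inter> z) choose k = card {u. u \<subseteq> y \<inter> z \<and> card u = k}"
      by (rule n_subsets[symmetric]) (use fz in simp)
    also have "{u. u \<subseteq> y \<inter> z \<and> card u = k} = {u \<in> ?U. u \<subseteq> y}" by auto
    finally show ?thesis .
  qed
  then have "(\<Sum>y\<in>Xr n r. of_nat (card (y \<inter> z) choose k) * \<phi> y)
      = (\<Sum>y\<in>Xr n r. \<Sum>u\<in>{u \<in> ?U. u \<subseteq> y}. \<phi> y)"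
    by simp
  also have "\<dots> = (\<Sum>u\<in>?U. \<Sum>y\<in>{y \<in> Xr n r. u \<subseteq> y}. \<phi> y)"
    by (rule sum.swap_restrict) (simp_all add: finite_Xr fU)
  also have "\<dots> = 0"
  proof (rule sum.neutral, rule ballI)
    fix u assume "u \<in> ?U"
    then have "u \<in> Xr n k" using z by (auto simp: Xr_def)
    then show "(\<Sum>y\<in>{y \<in> Xr n r. u \<subseteq> y}. \<phi> y) = 0"
      by (rule Vr_superset_sum_lower[OF \<phi> ks sr])
  qed
  finally show ?thesis .
qed

lemma Vr_sum_fun_Int:
  assumes \<phi>: "\<phi> \<in> Vr n r s" and sr: "s \<le> r" and z: "z \<subseteq> {..<n}" "card z < s"
  shows "(\<Sum>y\<in>Xr n r. F (card (y \<inter> z)) * \<phi> y) = 0"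
proof -
  obtain a where a: "\<forall>u\<le>card z. F u = (\<Sum>k\<le>card z. a k * of_nat (u choose k))"
    using binomial_interpolation[where w = F and d = "card z"] by blast
  have "card (y \<inter> z) \<le> card z" for y
    using finite_subset[OF z(1)] by (intro card_mono) auto
  then have "(\<Sum>y\<in>Xr n r. F (card (y \<inter> z)) * \<phi> y)
      = (\<Sum>k\<le>card z. a k * (\<Sum>y\<in>Xr n r. of_nat (card (y \<inter> z) choose k) * \<phi> y))"
    using a by (simp add: sum_distrib_left sum_distrib_right sum.swap[of _ "Xr n r"] mult.assoc)
  also have "\<dots> = 0"
    using Vr_sum_binomial_Int[OF \<phi> _ sr z(1)] z(2) by simp
  finally show ?thesis .
qed

lemma up_op_Vr:
  assumes \<phi>: "\<phi> \<in> Vr n s s"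
  shows "up_op n s r \<phi> \<in> Vr n r s"
proof (rule VrI)
  show "up_op n s r \<phi> \<in> Mr n r s"
    using \<phi> Vr_subset_Mr[of n s s] Mr_subset_L2r[of n s s] unfolding Mr_def by blast
next
  assume "s > 0"
  show "\<forall>z\<in>Xr n (s - 1). (\<Sum>x\<in>{x \<in> Xr n r. z \<subseteq> x}. up_op n s r \<phi> x) = 0"
  proof
    fix z assume z: "z \<in> Xr n (s - 1)"
    define F where "F i = (let m = s + (s - 1) - i in
      if m \<le> r then of_nat ((n - m) choose (r - m)) else (0::complex))" for i
    have count: "of_nat (card {x \<in> {x \<in> Xr n r. z \<subseteq> x}. y \<subseteq> x}) = F (card (y \<inter> z))"
      if y: "y \<in> Xr n s" for y
    proof -
      have "card {x \<in> {x \<in> Xr n r. z \<subseteq> x}. y \<subseteq> x} = card {x \<in> Xr n r. y \<union> z \<subseteq> x}"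
        by (rule arg_cong[where f = card]) auto
      also have "\<dots> = (if card (y \<union> z) \<le> r then (n - card (y \<union> z)) choose (r - card (y \<union> z)) else 0)"
        using XrD(1)[OF y] XrD(1)[OF z] by (intro card_Xr_supersets) auto
      also have "card (y \<union> z) = s + (s - 1) - card (y \<inter> z)"
        using card_Un_Int[OF XrD(2)[OF y] XrD(2)[OF z]] XrD(3)[OF y] XrD(3)[OF z] by simp
      finally show ?thesis by (simp add: F_def Let_def)
    qed
    have "(\<Sum>x\<in>{x \<in> Xr n r. z \<subseteq> x}. up_op n s r \<phi> x)
        = (\<Sum>x\<in>{x \<in> Xr n r. z \<subseteq> x}. \<Sum>y\<in>{y \<in> Xr n s. y \<subseteq> x}. \<phi> y)"
      by (intro sum.cong) (auto simp: up_op_eq)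
    also have "\<dots> = (\<Sum>y\<in>Xr n s. \<Sum>x\<in>{x \<in> {x \<in> Xr n r. z \<subseteq> x}. y \<subseteq> x}. \<phi> y)"
      by (rule sum.swap_restrict) (simp_all add: finite_Xr)
    also have "\<dots> = (\<Sum>y\<in>Xr n s. F (card (y \<inter> z)) * \<phi> y)"
      by (intro sum.cong refl) (simp only: sum_constant count)
    also have "\<dots> = 0"
      using \<open>s > 0\<close> XrD[OF z] by (intro Vr_sum_fun_Int[OF \<phi>]) auto
    finally show "(\<Sum>x\<in>{x \<in> Xr n r. z \<subseteq> x}. up_op n s r \<phi> x) = 0" .
  qed
qed

lemma sum_Xr_one_up:
  fixes F :: "nat \<Rightarrow> 'a::comm_semiring_1"
  assumes z: "z \<in> Xr n k" and x: "x \<subseteq> {..<n}"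
  shows "(\<Sum>y\<in>{y \<in> Xr n (Suc k). z \<subseteq> y}. F (card (y - x)))
     = of_nat (card (x - z)) * F (card (z - x)) + of_nat (card ({..<n} - x - z)) * F (Suc (card (z - x)))"
proof -
  let ?A = "{..<n::nat}"
  have zA: "z \<subseteq> ?A" and cz: "card z = k" using XrD[OF z] by auto
  have "card (y - x) = card (z - x) + card ((y - z) \<inter> (?A - x))" if "z \<subseteq> y" "y \<subseteq> ?A" for y
  proof -
    have "y - x = (z - x) \<union> ((y - z) \<inter> (?A - x))" using that by blast
    moreover have "finite y" using that finite_subset by blast
    ultimately show ?thesis using that by (simp add: card_Un_disjoint finite_subset disjoint_iff)
  qed
  then have "(\<Sum>y\<in>{y \<in> Xr n (Suc k). z \<subseteq> y}. F (card (y - x)))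
      = (\<Sum>y | z \<subseteq> y \<and> y \<subseteq> ?A \<and> card y = card z + 1.
           (\<lambda>b. F (card (z - x) + b)) (card ((y - z) \<inter> (?A - x))))"
    using Xr_supersets_eq[OF zA, of "Suc k"] cz by (intro sum.cong) auto
  also have "\<dots> = (\<Sum>b\<le>1. of_nat ((card (?A - x - z) choose b) * (card (?A - z - (?A - x)) choose (1 - b)))
      * F (card (z - x) + b))"
    by (rule sum_supersets_split) (use zA in auto)
  also have "?A - z - (?A - x) = x - z" using x by blast
  finally show ?thesis by (simp add: atMost_Suc ac_simps)
qed

lemma sum_subsets_binomial_Int:
  assumes x: "finite x" and kd: "k \<le> d"
  shows "(\<Sum>w | w \<subseteq> x \<and> card w = d. of_nat (card (w \<inter> y) choose k) :: 'a::comm_semiring_1)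
       = of_nat ((card (x \<inter> y) choose k) * ((card x - k) choose (d - k)))"
proof -
  let ?W = "{w. w \<subseteq> x \<and> card w = d}" and ?V = "{v. v \<subseteq> x \<inter> y \<and> card v = k}"
  have fW: "finite ?W" by (rule finite_subset[of _ "Pow x"]) (use x in auto)
  have fV: "finite ?V" by (rule finite_subset[of _ "Pow x"]) (use x in auto)
  have "card (w \<inter> y) choose k = card {v \<in> ?V. v \<subseteq> w}" if "w \<in> ?W" for w
  proof -
    have "card (w \<inter> y) choose k = card {v. v \<subseteq> w \<inter> y \<and> card v = k}"
      by (rule n_subsets[symmetric]) (use that x finite_subset in blast)
    also have "{v. v \<subseteq> w \<inter> y \<and> card v = k} = {v \<in> ?V. v \<subseteq> w}" using that by auto
    finally show ?thesis .
  qed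
  then have "(\<Sum>w\<in>?W. of_nat (card (w \<inter> y) choose k) :: 'a) = (\<Sum>w\<in>?W. \<Sum>v\<in>{v \<in> ?V. v \<subseteq> w}. 1)"
    by simp
  also have "\<dots> = (\<Sum>v\<in>?V. \<Sum>w\<in>{w \<in> ?W. v \<subseteq> w}. 1)"
    by (rule sum.swap_restrict[OF fW fV])
  also have "\<dots> = (\<Sum>v\<in>?V. of_nat ((card x - k) choose (d - k)))"
  proof (rule sum.cong[OF refl])
    fix v assume v: "v \<in> ?V"
    then have "finite v" "card v = k" using x finite_subset by auto
    have "{w \<in> ?W. v \<subseteq> w} = {w. v \<subseteq> w \<and> w \<subseteq> x \<and> card w = card v + (d - k)}"
      using v kd by auto
    also have "card \<dots> = card (x - v) choose (d - k)"
      using v x by (intro card_supersets) auto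
    finally show "(\<Sum>w\<in>{w \<in> ?W. v \<subseteq> w}. 1) = (of_nat ((card x - k) choose (d - k)) :: 'a)"
      using v \<open>finite v\<close> by (simp add: card_Diff_subset)
  qed
  also have "\<dots> = of_nat (card ?V * ((card x - k) choose (d - k)))" by simp
  also have "card ?V = card (x \<inter> y) choose k" by (rule n_subsets) (use x in simp)
  finally show ?thesis .
qed

lemma binomial_Int_sum_in_Mr:
  assumes dr: "d \<le> r"
  shows "(\<lambda>x. if x \<in> Xr n r then \<Sum>k\<le>d. a k * of_nat (card (x \<inter> y) choose k) else 0) \<in> Mr n r d"
proof -
  define \<chi> where "\<chi> w = (if w \<in> Xr n d then
     \<Sum>k\<le>d. a k / of_nat ((r - k) choose (d - k)) * of_nat (card (w \<inter> y) choose k) else 0)" for w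
  have "up_op n d r \<chi> x = (\<Sum>k\<le>d. a k * of_nat (card (x \<inter> y) choose k))" if x: "x \<in> Xr n r" for x
  proof -
    have "up_op n d r \<chi> x = (\<Sum>w | w \<subseteq> x \<and> card w = d. \<chi> w)"
      using x by (simp add: up_op_def)
    also have "\<dots> = (\<Sum>w | w \<subseteq> x \<and> card w = d.
        \<Sum>k\<le>d. a k / of_nat ((r - k) choose (d - k)) * of_nat (card (w \<inter> y) choose k))"
      using XrD(1)[OF x] by (intro sum.cong) (auto simp: \<chi>_def Xr_def)
    also have "\<dots> = (\<Sum>k\<le>d. a k / of_nat ((r - k) choose (d - k)) *
        (\<Sum>w | w \<subseteq> x \<and> card w = d. of_nat (card (w \<inter> y) choose k)))"
      by (simp add: sum.swap[of _ "{w. w \<subseteq> x \<and> card w = d}"] sum_distrib_left)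
    also have "\<dots> = (\<Sum>k\<le>d. a k * of_nat (card (x \<inter> y) choose k))"
      using dr XrD[OF x] by (intro sum.cong) (auto simp: sum_subsets_binomial_Int)
    finally show ?thesis .
  qed
  moreover have "\<chi> \<in> L2r n d" by (simp add: \<chi>_def L2r_def)
  ultimately show ?thesis
    unfolding Mr_def by (intro rev_image_eqI[of \<chi>]) (auto simp: up_op_def)
qed

lemma le_Nfun_iff: "s \<le> Nfun n r1 r2 \<longleftrightarrow> s \<le> r1 \<and> s \<le> n - r1 \<and> s \<le> r2 \<and> s \<le> n - r2"
  by (auto simp: Nfun_def)

lemma card_Diff_in_kdom:
  assumes x1: "x1 \<in> Xr n r1" and x2: "x2 \<in> Xr n r2"
  shows "card (x2 - x1) \<in> kdom n r1 r2"
proof -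
  note XrD[OF x1] XrD[OF x2]
  have "r2 - r1 \<le> card (x2 - x1)" using diff_card_le_card_Diff[of x1 x2] x1 x2 by (simp add: XrD)
  moreover have "card (x2 - x1) \<le> r2" using x2 card_mono[of x2 "x2 - x1"] by (auto simp: XrD)
  moreover have "card (x2 - x1) \<le> card ({..<n} - x1)"
    using XrD(1)[OF x2] by (intro card_mono) auto
  moreover have "card ({..<n} - x1) = n - r1" using XrD[OF x1] by (simp add: card_Diff_subset)
  ultimately show ?thesis by (simp add: kdom_def)
qed

lemma Xr_exists_card_Diff:
  assumes x: "x \<in> Xr n a" and mb: "m \<le> b" and ba: "b - m \<le> a" and mn: "m \<le> n - a"
  shows "\<exists>y\<in>Xr n b. card (y - x) = m \<and> card (x - y) = a - (b - m)"
proof -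
  have xA: "x \<subseteq> {..<n}" and fx: "finite x" and cx: "card x = a" using XrD[OF x] by auto
  obtain u where u: "u \<subseteq> x" "card u = b - m" "finite u"
    using ba cx by (metis obtain_subset_with_card_n)
  have "card ({..<n} - x) = n - a" using xA fx cx by (simp add: card_Diff_subset)
  then obtain v where v: "v \<subseteq> {..<n} - x" "card v = m" "finite v"
    using mn by (metis obtain_subset_with_card_n)
  have "u \<inter> v = {}" using u v by blast
  then have "card (u \<union> v) = b" using u v mb by (simp add: card_Un_disjoint)
  moreover have "u \<union> v \<subseteq> {..<n}" using u v xA by blast
  moreover have "(u \<union> v) - x = v" and "x - (u \<union> v) = x - u" using u v by blast+
  moreover have "card (x - u) = a - (b - m)" using u cx by (simp add: card_Diff_subset)
  ultimately show ?thesis using v(2) by (intro bexI[of _ "u \<union> v"]) (simp_all add: Xr_def)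
qed

lemma kdom_attained:
  assumes x2: "x2 \<in> Xr n r2" and t: "t \<in> kdom n r1 r2" and r1: "r1 \<le> n"
  shows "\<exists>x1\<in>Xr n r1. card (x2 - x1) = t"
proof -
  have t1: "r2 - r1 \<le> t" "t \<le> n - r1" "t \<le> r2" using t by (auto simp: kdom_def)
  have "r2 \<le> n" using card_mono[OF _ XrD(1)[OF x2]] XrD(3)[OF x2] by simp
  then have "r1 + t - r2 \<le> r1" "r1 - (r1 + t - r2) \<le> r2" "r1 + t - r2 \<le> n - r2"
    and "r2 - (r1 - (r1 + t - r2)) = t" using t1 r1 by arith+
  then show ?thesis using Xr_exists_card_Diff[OF x2] by metis
qed

lemma card_kdom_gt:
  assumes "s \<le> Nfun n r1 r2" and "r1 \<le> n" and "r2 \<le> n"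
  shows "s < card (kdom n r1 r2)"
  using assms unfolding kdom_def Nfun_def by (simp add: min_def split: if_splits; arith)

section \<open>The diagonal kernel\<close>

definition diag_kernel_rec :: "nat \<Rightarrow> nat \<Rightarrow> nat \<Rightarrow> (nat \<Rightarrow> complex) \<Rightarrow> bool" where
  "diag_kernel_rec n r1 s \<mu> \<longleftrightarrow>
     (\<forall>m<s. of_nat (r1 - s + 1 + m) * \<mu> m + of_nat (n - r1 - m) * \<mu> (Suc m) = 0)"

lemma diag_kernel_superset_sum:
  assumes rec: "diag_kernel_rec n r1 s \<mu>" and sr1: "s \<le> r1" and s: "s > 0"
    and x1: "x1 \<in> Xr n r1" and z: "z \<in> Xr n (s - 1)"
  shows "(\<Sum>y\<in>{y \<in> Xr n s. z \<subseteq> y}. \<mu> (card (y - x1))) = 0"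
proof -
  note x1D = XrD[OF x1] and zD = XrD[OF z]
  define m where "m = card (z - x1)"
  have Int_le: "card (x1 \<inter> z) \<le> s - 1" using card_mono[OF zD(2), of "x1 \<inter> z"] zD(3) by auto
  have "m = (s - 1) - card (x1 \<inter> z)"
    using zD by (simp add: m_def card_Diff_subset_Int Int_commute)
  then have "m < s" and "card (x1 - z) = r1 - s + 1 + m"
    using x1D Int_le sr1 s by (simp_all add: card_Diff_subset_Int)
  moreover have "card ({..<n} - x1 - z) = n - r1 - m"
  proof -
    have "{..<n} - x1 - z = ({..<n} - x1) - (z - x1)" by blast
    then show ?thesis
      using x1D zD by (simp add: m_def card_Diff_subset Diff_mono)
  qed
  moreover have "(\<Sum>y\<in>{y \<in> Xr n s. z \<subseteq> y}. \<mu> (card (y - x1)))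
      = of_nat (card (x1 - z)) * \<mu> m + of_nat (card ({..<n} - x1 - z)) * \<mu> (Suc m)"
    using sum_Xr_one_up[OF z x1D(1), of \<mu>] s by (simp add: m_def)
  ultimately show ?thesis using rec by (simp add: diag_kernel_rec_def)
qed

lemma kernel_op_diag_in_Vr:
  assumes rec: "diag_kernel_rec n r1 s \<mu>" and sr1: "s \<le> r1"
  shows "kernel_op n r1 s \<mu> \<psi> \<in> Vr n s s"
proof (rule VrI)
  show "kernel_op n r1 s \<mu> \<psi> \<in> Mr n s s"
    by (simp add: Mr_same_level kernel_op_def L2r_def)
next
  assume s: "s > 0"
  show "\<forall>z\<in>Xr n (s - 1). (\<Sum>y\<in>{y \<in> Xr n s. z \<subseteq> y}. kernel_op n r1 s \<mu> \<psi> y) = 0"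
  proof
    fix z assume z: "z \<in> Xr n (s - 1)"
    have "(\<Sum>y\<in>{y \<in> Xr n s. z \<subseteq> y}. kernel_op n r1 s \<mu> \<psi> y)
        = (\<Sum>y\<in>{y \<in> Xr n s. z \<subseteq> y}. \<Sum>x1\<in>Xr n r1. \<mu> (card (y - x1)) * \<psi> x1)"
      by (intro sum.cong) (auto simp: kernel_op_def)
    also have "\<dots> = (\<Sum>x1\<in>Xr n r1. (\<Sum>y\<in>{y \<in> Xr n s. z \<subseteq> y}. \<mu> (card (y - x1))) * \<psi> x1)"
      by (simp add: sum.swap[of _ "Xr n r1"] sum_distrib_right)
    also have "\<dots> = 0"
      using diag_kernel_superset_sum[OF rec sr1 s _ z] by simp
    finally show "(\<Sum>y\<in>{y \<in> Xr n s. z \<subseteq> y}. kernel_op n r1 s \<mu> \<psi> y) = 0" .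
  qed
qed

(* For |z| = k and d = |y - z|, the sum of mu(|y - x1|) over the r1-sets x1 containing z;
   b is the number of points of y - z that x1 picks up. *)
definition superset_profile :: "nat \<Rightarrow> nat \<Rightarrow> nat \<Rightarrow> (nat \<Rightarrow> complex) \<Rightarrow> nat \<Rightarrow> complex" where
  "superset_profile n r1 k \<mu> d =
     (\<Sum>b\<le>r1 - k. of_nat ((d choose b) * ((n - k - d) choose (r1 - k - b))) * \<mu> (d - b))"

lemma sum_supersets_eq_superset_profile:
  assumes y: "y \<subseteq> {..<n}" and z: "z \<in> Xr n k" and kr1: "k \<le> r1"
  shows "(\<Sum>x1\<in>{x1 \<in> Xr n r1. z \<subseteq> x1}. \<mu> (card (y - x1))) = superset_profile n r1 k \<mu> (card (y - z))"
proof -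
  let ?A = "{..<n::nat}"
  note zD = XrD[OF z]
  have fy: "finite y" using y finite_subset by blast
  have "{x1 \<in> Xr n r1. z \<subseteq> x1} = {x. z \<subseteq> x \<and> x \<subseteq> ?A \<and> card x = card z + (r1 - k)}"
    using Xr_supersets_eq[OF zD(1), of r1] zD(3) kr1 by simp
  moreover have "\<mu> (card (y - x)) = (\<lambda>b. \<mu> (card (y - z) - b)) (card ((x - z) \<inter> y))" if "z \<subseteq> x" for x
  proof -
    have "y - x = (y - z) - ((x - z) \<inter> y)" using that by blast
    moreover have "card ((y - z) - ((x - z) \<inter> y)) = card (y - z) - card ((x - z) \<inter> y)"
      using fy by (intro card_Diff_subset) auto
    ultimately show ?thesis by simp
  qed
  ultimately have "(\<Sum>x1\<in>{x1 \<in> Xr n r1. z \<subseteq> x1}. \<mu> (card (y - x1)))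
      = (\<Sum>x | z \<subseteq> x \<and> x \<subseteq> ?A \<and> card x = card z + (r1 - k).
          (\<lambda>b. \<mu> (card (y - z) - b)) (card ((x - z) \<inter> y)))"
    by (intro sum.cong) blast+
  also have "\<dots> = (\<Sum>b\<le>r1 - k. of_nat ((card (y - z) choose b) * (card (?A - z - y) choose (r1 - k - b)))
      * \<mu> (card (y - z) - b))"
    by (rule sum_supersets_split) (use y zD in auto)
  also have "card (?A - z - y) = n - k - card (y - z)"
  proof -
    have "?A - z - y = (?A - z) - (y - z)" by blast
    then show ?thesis using y zD fy by (simp add: card_Diff_subset Diff_mono)
  qed
  finally show ?thesis by (simp add: superset_profile_def)
qed

lemma superset_profile_rec:
  assumes rec: "diag_kernel_rec n r1 s \<mu>" and sr1: "s \<le> r1" and s: "s > 0"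
    and z: "z \<in> Xr n (s - 1)" and z': "z' \<in> Xr n (s - 1)"
  defines "\<beta> \<equiv> superset_profile n r1 (s - 1) \<mu>" and "m \<equiv> card (z' - z)"
  shows "of_nat m * \<beta> m + of_nat (n - (s - 1) - m) * \<beta> (Suc m) = 0"
proof -
  note zD = XrD[OF z] and z'D = XrD[OF z']
  have "(\<Sum>y\<in>{y \<in> Xr n s. z' \<subseteq> y}. \<beta> (card (y - z)))
      = (\<Sum>y\<in>{y \<in> Xr n s. z' \<subseteq> y}. \<Sum>x1\<in>{x1 \<in> Xr n r1. z \<subseteq> x1}. \<mu> (card (y - x1)))"
    using sr1 unfolding \<beta>_def
    by (intro sum.cong refl sum_supersets_eq_superset_profile[symmetric, OF _ z]) (auto dest: XrD)
  also have "\<dots> = (\<Sum>x1\<in>{x1 \<in> Xr n r1. z \<subseteq> x1}. \<Sum>y\<in>{y \<in> Xr n s. z' \<subseteq> y}. \<mu> (card (y - x1)))"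
    by (rule sum.swap)
  also have "\<dots> = 0"
    using diag_kernel_superset_sum[OF rec sr1 s _ z'] by simp
  finally have "(\<Sum>y\<in>{y \<in> Xr n (Suc (s - 1)). z' \<subseteq> y}. \<beta> (card (y - z))) = 0"
    using s by simp
  moreover have "card (z - z') = m"
    using zD z'D by (simp add: m_def card_Diff_subset_Int Int_commute)
  moreover have "card ({..<n} - z - z') = n - (s - 1) - m"
  proof -
    have "{..<n} - z - z' = ({..<n} - z) - (z' - z)" by blast
    then show ?thesis using zD z'D by (simp add: m_def card_Diff_subset Diff_mono)
  qed
  ultimately show ?thesis
    using sum_Xr_one_up[OF z' zD(1), of \<beta>] by (simp add: m_def)
qed

lemma superset_profile_eq_0:
  assumes rec: "diag_kernel_rec n r1 s \<mu>" and sr1: "s \<le> r1" and sn: "s \<le> n - r1"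
    and z: "z \<in> Xr n (s - 1)" and d: "1 \<le> d" "d \<le> s"
  shows "superset_profile n r1 (s - 1) \<mu> d = 0"
proof -
  let ?\<beta> = "superset_profile n r1 (s - 1) \<mu>"
  have step: "of_nat m * ?\<beta> m + of_nat (n - (s - 1) - m) * ?\<beta> (Suc m) = 0" if m: "m \<le> s - 1" for m
  proof -
    have "m \<le> n - (s - 1)" using m sr1 sn by linarith
    then obtain z' where "z' \<in> Xr n (s - 1)" "card (z' - z) = m"
      using Xr_exists_card_Diff[OF z m diff_le_self] by blast
    then show ?thesis using superset_profile_rec[OF rec sr1 _ z] d by auto
  qed
  from d show ?thesis
  proof (induction d)
    case (Suc m)
    have "of_nat m * ?\<beta> m = 0" using Suc by (cases "m = 0") auto
    moreover have "m \<le> s - 1" using Suc.prems by simp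
    ultimately have "of_nat (n - (s - 1) - m) * ?\<beta> (Suc m) = 0"
      using step by (metis add.left_neutral)
    moreover have "n - (s - 1) - m \<noteq> 0" using Suc.prems sr1 sn by linarith
    ultimately show ?case by (metis mult_eq_0_iff of_nat_eq_0_iff)
  qed simp
qed

lemma kernel_row_superset_sum:
  assumes rec: "diag_kernel_rec n r1 s \<mu>" and sr1: "s \<le> r1" and sn: "s \<le> n - r1" and s: "s > 0"
    and y: "y \<in> Xr n s" and z: "z \<in> Xr n (s - 1)"
  shows "(\<Sum>x1\<in>{x1 \<in> Xr n r1. z \<subseteq> x1}. \<mu> (card (y - x1))) = 0"
proof -
  note yD = XrD[OF y] and zD = XrD[OF z]
  have "1 \<le> card (y - z)" using diff_card_le_card_Diff[OF zD(2), of y] yD zD s by simp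
  moreover have "card (y - z) \<le> s" using card_mono[OF yD(2), of "y - z"] yD by auto
  ultimately have "superset_profile n r1 (s - 1) \<mu> (card (y - z)) = 0"
    by (rule superset_profile_eq_0[OF rec sr1 sn z])
  then show ?thesis
    using sr1 by (simp add: sum_supersets_eq_superset_profile[OF yD(1) z])
qed

lemma kernel_row_in_Vr:
  assumes rec: "diag_kernel_rec n r1 s \<mu>" and sr1: "s \<le> r1" and sn: "s \<le> n - r1"
    and y: "y \<in> Xr n s"
  shows "(\<lambda>x1. if x1 \<in> Xr n r1 then cnj (\<mu> (card (y - x1))) else 0) \<in> Vr n r1 s"
proof (rule VrI)
  obtain a where a: "\<forall>u\<le>s. cnj (\<mu> (s - u)) = (\<Sum>k\<le>s. a k * of_nat (u choose k))"
    using binomial_interpolation[where w = "\<lambda>u. cnj (\<mu> (s - u))" and d = s] by blast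
  have "card (y - x) = s - card (x \<inter> y)" and "card (x \<inter> y) \<le> s" for x
    using XrD[OF y] card_mono[OF XrD(2)[OF y], of "x \<inter> y"]
    by (auto simp: card_Diff_subset_Int Int_commute)
  then have "(\<lambda>x1. if x1 \<in> Xr n r1 then cnj (\<mu> (card (y - x1))) else 0)
      = (\<lambda>x. if x \<in> Xr n r1 then \<Sum>k\<le>s. a k * of_nat (card (x \<inter> y) choose k) else 0)"
    using a by auto
  then show "(\<lambda>x1. if x1 \<in> Xr n r1 then cnj (\<mu> (card (y - x1))) else 0) \<in> Mr n r1 s"
    using binomial_Int_sum_in_Mr[OF sr1] by simp
next
  assume "s > 0"
  then show "\<forall>z\<in>Xr n (s - 1).
      (\<Sum>x\<in>{x \<in> Xr n r1. z \<subseteq> x}. if x \<in> Xr n r1 then cnj (\<mu> (card (y - x))) else 0) = 0"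
    using kernel_row_superset_sum[OF rec sr1 sn _ y] by (simp flip: cnj_sum)
qed

lemma kernel_op_diag_orth:
  assumes rec: "diag_kernel_rec n r1 s \<mu>" and sr1: "s \<le> r1" and sn: "s \<le> n - r1"
    and orth: "\<forall>\<phi>\<in>Vr n r1 s. inner_r n r1 \<psi> \<phi> = 0"
  shows "kernel_op n r1 s \<mu> \<psi> = (\<lambda>_. 0)"
proof
  fix y
  show "kernel_op n r1 s \<mu> \<psi> y = 0"
  proof (cases "y \<in> Xr n s")
    case True
    let ?row = "\<lambda>x1. if x1 \<in> Xr n r1 then cnj (\<mu> (card (y - x1))) else 0"
    have "kernel_op n r1 s \<mu> \<psi> y = inner_r n r1 \<psi> ?row"
      using True unfolding kernel_op_def inner_r_def by (auto intro: sum.cong)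
    then show ?thesis using orth kernel_row_in_Vr[OF rec sr1 sn True] by simp
  qed (simp add: kernel_op_def)
qed

lemma sum_subsets_card_Diff:
  fixes \<mu> :: "nat \<Rightarrow> 'a::comm_semiring_1" and x1 x2 :: "'b set"
  assumes x2: "finite x2"
  shows "(\<Sum>y | y \<subseteq> x2 \<and> card y = s. \<mu> (card (y - x1)))
       = (\<Sum>j\<le>s. of_nat ((card (x2 - x1) choose j) * ((card x2 - card (x2 - x1)) choose (s - j))) * \<mu> j)"
proof -
  have "(\<Sum>y | y \<subseteq> x2 \<and> card y = s. \<mu> (card (y - x1)))
      = (\<Sum>y | {} \<subseteq> y \<and> y \<subseteq> x2 \<and> card y = card ({}::'b set) + s. \<mu> (card ((y - {}) \<inter> (x2 - x1))))"
    by (intro sum.cong) (auto intro!: arg_cong[where f = "\<lambda>A. \<mu> (card A)"])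
  also have "\<dots> = (\<Sum>j\<le>s. of_nat ((card (x2 - x1 - {}) choose j) * (card (x2 - {} - (x2 - x1)) choose (s - j))) * \<mu> j)"
    by (rule sum_supersets_split) (use x2 in auto)
  also have "card (x2 - {} - (x2 - x1)) = card x2 - card (x2 - x1)"
    using x2 by (simp add: card_Diff_subset)
  finally show ?thesis by simp
qed

lemma kernel_op_comp_up_op:
  assumes K: "\<forall>t\<le>r2. K t = (\<Sum>j\<le>s. of_nat ((t choose j) * ((r2 - t) choose (s - j))) * \<mu> j)"
  shows "kernel_op n r1 r2 K \<psi> = up_op n s r2 (kernel_op n r1 s \<mu> \<psi>)"
proof
  fix x2
  show "kernel_op n r1 r2 K \<psi> x2 = up_op n s r2 (kernel_op n r1 s \<mu> \<psi>) x2"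
  proof (cases "x2 \<in> Xr n r2")
    case True
    note x2D = XrD[OF True]
    have col: "(\<Sum>y\<in>{y \<in> Xr n s. y \<subseteq> x2}. \<mu> (card (y - x1))) = K (card (x2 - x1))" for x1
    proof -
      have "{y \<in> Xr n s. y \<subseteq> x2} = {y. y \<subseteq> x2 \<and> card y = s}"
        using x2D by (auto simp: Xr_def)
      moreover have "card (x2 - x1) \<le> r2" using x2D card_mono[of x2 "x2 - x1"] by auto
      ultimately show ?thesis
        using K x2D by (simp add: sum_subsets_card_Diff)
    qed
    have "up_op n s r2 (kernel_op n r1 s \<mu> \<psi>) x2
        = (\<Sum>y\<in>{y \<in> Xr n s. y \<subseteq> x2}. \<Sum>x1\<in>Xr n r1. \<mu> (card (y - x1)) * \<psi> x1)"
      using True by (simp add: up_op_eq kernel_op_def)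
    also have "\<dots> = (\<Sum>x1\<in>Xr n r1. (\<Sum>y\<in>{y \<in> Xr n s. y \<subseteq> x2}. \<mu> (card (y - x1))) * \<psi> x1)"
      by (simp add: sum.swap[of _ "Xr n r1"] sum_distrib_right)
    also have "\<dots> = kernel_op n r1 r2 K \<psi> x2"
      using True by (simp add: col kernel_op_def)
    finally show ?thesis ..
  qed (simp add: kernel_op_def up_op_def)
qed

lemma kernel_ok_comp:
  assumes rec: "diag_kernel_rec n r1 s \<mu>" and sr1: "s \<le> r1" and sn: "s \<le> n - r1"
    and K: "\<forall>t\<le>r2. K t = (\<Sum>j\<le>s. of_nat ((t choose j) * ((r2 - t) choose (s - j))) * \<mu> j)"
  shows "kernel_ok n r1 r2 s K"
  unfolding kernel_ok_def kernel_op_comp_up_op[OF K]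
proof (intro conjI ballI impI)
  fix \<psi>
  show "up_op n s r2 (kernel_op n r1 s \<mu> \<psi>) \<in> Vr n r2 s"
    by (rule up_op_Vr[OF kernel_op_diag_in_Vr[OF rec sr1]])
  assume "\<forall>\<phi>\<in>Vr n r1 s. inner_r n r1 \<psi> \<phi> = 0"
  then show "up_op n s r2 (kernel_op n r1 s \<mu> \<psi>) = (\<lambda>_. 0)"
    by (simp add: kernel_op_diag_orth[OF rec sr1 sn] up_op_def fun_eq_iff)
qed

section \<open>The closed form\<close>

definition lambda_diag :: "nat \<Rightarrow> nat \<Rightarrow> nat \<Rightarrow> nat \<Rightarrow> complex" where
  "lambda_diag n r1 s j = (-1) ^ j * pochhammer (of_nat r1 - of_nat s + 1) j / falling (of_nat (n - r1)) j"

lemma falling_Suc: "falling a (Suc m) = falling a m * (a - of_nat m)"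
  by (simp add: falling_def)

lemma falling_of_nat: "j \<le> b \<Longrightarrow> falling (of_nat b) j = of_nat (\<Prod>i<j. b - i)"
  by (simp add: falling_def of_nat_diff)

lemma lambda_diag_0: "lambda_diag n r1 s 0 = 1"
  by (simp add: lambda_diag_def falling_def)

lemma lambda_diag_Suc:
  assumes sr1: "s \<le> r1" and m: "m \<le> n - r1"
  shows "lambda_diag n r1 s (Suc m) = - lambda_diag n r1 s m * of_nat (r1 - s + 1 + m) / of_nat (n - r1 - m)"
proof -
  let ?a = "of_nat r1 - of_nat s + 1 :: complex" and ?b = "of_nat (n - r1) :: complex"
  have "(-1) ^ Suc m * (P * A) / (F * B) = - ((-1) ^ m * P / F) * A / B" for P A F B :: complex
    by simp
  then have "lambda_diag n r1 s (Suc m) = - lambda_diag n r1 s m * (?a + of_nat m) / (?b - of_nat m)"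
    unfolding lambda_diag_def pochhammer_Suc falling_Suc .
  also have "?a + of_nat m = of_nat (r1 - s + 1 + m)" using sr1 by (simp add: of_nat_diff)
  also have "?b - of_nat m = of_nat (n - r1 - m)" by (rule of_nat_diff[OF m, symmetric])
  finally show ?thesis .
qed

lemma diag_kernel_rec_lambda_diag:
  assumes sr1: "s \<le> r1" and sn: "s \<le> n - r1"
  shows "diag_kernel_rec n r1 s (\<lambda>j. c * lambda_diag n r1 s j)"
  unfolding diag_kernel_rec_def
proof (intro allI impI)
  fix m assume "m < s"
  then have "n - r1 - m \<noteq> 0" and m: "m < n - r1" using sn by simp_all
  then have B: "of_nat (n - r1 - m) \<noteq> (0::complex)" by (metis of_nat_eq_0_iff)
  have "A * (c * x) + B * (c * (- x * A / B)) = 0" if "B \<noteq> 0" for A B x :: complex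
    using that by (simp add: field_simps)
  from this[OF B] show "of_nat (r1 - s + 1 + m) * (c * lambda_diag n r1 s m)
      + of_nat (n - r1 - m) * (c * lambda_diag n r1 s (Suc m)) = 0"
    unfolding lambda_diag_Suc[OF sr1 less_imp_le[OF m]] .
qed

lemma lambda_diag_sign:
  assumes sr1: "s \<le> r1" and j: "j \<le> n - r1"
  shows "\<exists>x>0. lambda_diag n r1 s j = (-1) ^ j * of_real x"
proof -
  define P where "P = pochhammer (r1 - s + 1) j"
  define Q where "Q = (\<Prod>i<j. n - r1 - i)"
  have "P > 0" unfolding P_def by (rule pochhammer_pos) simp
  moreover have "Q > 0" unfolding Q_def using j by (auto intro!: prod_pos)
  moreover have "of_nat r1 - of_nat s + 1 = (of_nat (r1 - s + 1) :: complex)"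
    using sr1 by (simp add: of_nat_diff)
  then have "lambda_diag n r1 s j = (-1) ^ j * (of_nat P / of_nat Q)"
    unfolding lambda_diag_def falling_of_nat[OF j] P_def Q_def pochhammer_of_nat[symmetric]
    by (simp add: ac_simps)
  ultimately show ?thesis
    by (intro exI[of _ "real P / real Q"]) simp
qed

definition lambda_poly_formula :: "nat \<Rightarrow> nat \<Rightarrow> nat \<Rightarrow> nat \<Rightarrow> complex poly" where
  "lambda_poly_formula n r1 r2 s = smult (inverse (of_nat (r2 choose s)))
     (\<Sum>j\<le>s. smult (lambda_diag n r1 s j) (gbinomial_poly 0 1 j * gbinomial_poly (of_nat r2) (-1) (s - j)))"

lemma poly_lambda_poly_formula:
  "poly (lambda_poly_formula n r1 r2 s) t = inverse (of_nat (r2 choose s)) *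
     (\<Sum>j\<le>s. (t gchoose j) * ((of_nat r2 - t) gchoose (s - j)) * lambda_diag n r1 s j)"
  by (simp add: lambda_poly_formula_def poly_sum poly_gbinomial_poly mult_ac)

lemma poly_lambda_poly_formula_of_nat:
  assumes "t \<le> r2"
  shows "poly (lambda_poly_formula n r1 r2 s) (of_nat t) = (\<Sum>j\<le>s.
     of_nat ((t choose j) * ((r2 - t) choose (s - j))) * (inverse (of_nat (r2 choose s)) * lambda_diag n r1 s j))"
  using assms by (simp add: poly_lambda_poly_formula sum_distrib_left binomial_gbinomial of_nat_diff mult_ac)

lemma poly_lambda_poly_formula_0:
  assumes "s \<le> r2"
  shows "poly (lambda_poly_formula n r1 r2 s) 0 = 1"
proof -
  have "(\<Sum>j\<le>s. (0 gchoose j) * ((of_nat r2 - 0) gchoose (s - j)) * lambda_diag n r1 s j)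
      = (\<Sum>j\<le>s. if j = 0 then of_nat r2 gchoose s else (0::complex))"
    by (intro sum.cong) (auto simp: lambda_diag_0 gbinomial_0_left)
  then show ?thesis using assms by (simp add: poly_lambda_poly_formula binomial_gbinomial[symmetric])
qed

lemma poly_lambda_poly_formula_diag:
  assumes "j \<le> s"
  shows "poly (lambda_poly_formula n r1 s s) (of_nat j) = lambda_diag n r1 s j"
proof -
  have "of_nat ((j choose i) * ((s - j) choose (s - i))) * (inverse (of_nat (s choose s)) * lambda_diag n r1 s i)
      = (if i = j then lambda_diag n r1 s i else 0)" if "i \<le> s" for i
    using assms that by (cases i j rule: linorder_cases) auto
  then show ?thesis using assms by (simp add: poly_lambda_poly_formula_of_nat)
qed

lemma coeff_lambda_poly_formula:
  "coeff (lambda_poly_formula n r1 r2 s) s = inverse (of_nat (r2 choose s)) *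
     (\<Sum>j\<le>s. lambda_diag n r1 s j * ((-1) ^ (s - j) / (fact j * fact (s - j))))"
proof -
  have "coeff (gbinomial_poly 0 1 j * gbinomial_poly (of_nat r2 :: complex) (-1) (s - j)) s
      = (-1) ^ (s - j) / (fact j * fact (s - j))" if "j \<le> s" for j
    using that coeff_mult_degree_sum[of "gbinomial_poly 0 1 j" "gbinomial_poly (of_nat r2) (-1) (s - j)"]
    by (simp add: degree_gbinomial_poly coeff_gbinomial_poly_self)
  then have "coeff (\<Sum>j\<le>s. smult (lambda_diag n r1 s j)
        (gbinomial_poly 0 1 j * gbinomial_poly (of_nat r2) (-1) (s - j))) s
      = (\<Sum>j\<le>s. lambda_diag n r1 s j * ((-1) ^ (s - j) / (fact j * fact (s - j))))"
    unfolding coeff_sum by (intro sum.cong) simp_all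
  then show ?thesis by (simp add: lambda_poly_formula_def)
qed

lemma coeff_lambda_poly_formula_nonzero:
  assumes sr1: "s \<le> r1" and sn: "s \<le> n - r1" and sr2: "s \<le> r2"
  shows "coeff (lambda_poly_formula n r1 r2 s) s \<noteq> 0"
proof -
  have "\<exists>x>0. lambda_diag n r1 s j * ((-1) ^ (s - j) / (fact j * fact (s - j))) = (-1) ^ s * of_real x"
    if "j \<le> s" for j
  proof -
    have "j \<le> n - r1" using that sn by simp
    then obtain x where "x > 0" and x: "lambda_diag n r1 s j = (-1) ^ j * of_real x"
      using lambda_diag_sign[OF sr1] by blast
    have "(-1) ^ j * (-1) ^ (s - j) = ((-1) ^ s :: complex)"
      using that by (simp flip: power_add)
    then have "lambda_diag n r1 s j * ((-1) ^ (s - j) / (fact j * fact (s - j)))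
        = (-1) ^ s * of_real (x / (fact j * fact (s - j)))"
      by (simp add: x field_simps)
    then show ?thesis using \<open>x > 0\<close> by (intro exI[of _ "x / (fact j * fact (s - j))"]) simp
  qed
  then obtain x where x: "\<forall>j\<le>s. x j > 0 \<and>
      lambda_diag n r1 s j * ((-1) ^ (s - j) / (fact j * fact (s - j))) = (-1) ^ s * of_real (x j)"
    by metis
  then have "(\<Sum>j\<le>s. lambda_diag n r1 s j * ((-1) ^ (s - j) / (fact j * fact (s - j))))
      = (-1) ^ s * of_real (\<Sum>j\<le>s. x j)"
    by (simp add: sum_distrib_left)
  moreover have "(\<Sum>j\<le>s. x j) > 0" using x by (intro sum_pos) auto
  then have "complex_of_real (\<Sum>j\<le>s. x j) \<noteq> 0" by (simp only: of_real_eq_0_iff)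
  ultimately show ?thesis using sr2 by (simp only: coeff_lambda_poly_formula) simp
qed

lemma degree_lambda_poly_formula:
  assumes "s \<le> r1" and "s \<le> n - r1" and "s \<le> r2"
  shows "degree (lambda_poly_formula n r1 r2 s) = s"
proof (rule antisym)
  have "degree (gbinomial_poly 0 1 j * gbinomial_poly (of_nat r2) (-1) (s - j)) \<le> s" if "j \<le> s" for j
    using that degree_mult_le[of "gbinomial_poly 0 1 j" "gbinomial_poly (of_nat r2) (-1) (s - j)"]
    by (simp add: degree_gbinomial_poly)
  then show "degree (lambda_poly_formula n r1 r2 s) \<le> s"
    unfolding lambda_poly_formula_def
    by (intro order.trans[OF degree_smult_le] degree_sum_le) (auto intro: order.trans[OF degree_smult_le])
  show "s \<le> degree (lambda_poly_formula n r1 r2 s)"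
    by (rule le_degree) (rule coeff_lambda_poly_formula_nonzero[OF assms])
qed

lemma kernel_ok_lambda_poly_formula:
  assumes "s \<le> r1" and "s \<le> n - r1"
  shows "kernel_ok n r1 r2 s (\<lambda>k. poly (lambda_poly_formula n r1 r2 s) (of_nat k))"
  by (rule kernel_ok_comp[OF diag_kernel_rec_lambda_diag[OF assms, where c = "inverse (of_nat (r2 choose s))"] assms])
    (simp add: poly_lambda_poly_formula_of_nat)

section \<open>Uniqueness\<close>

lemma kernel_op_kdom_cong:
  assumes "\<forall>k\<in>kdom n r1 r2. ker k = ker' k"
  shows "kernel_op n r1 r2 ker = kernel_op n r1 r2 ker'"
  using assms card_Diff_in_kdom by (auto simp: kernel_op_def fun_eq_iff intro!: sum.cong)

lemma kernel_ok_kills_Mr_lower: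
  assumes ok: "kernel_ok n r1 r2 s ker" and "s > 0" and \<psi>: "\<psi> \<in> Mr n r1 (s - 1)"
  shows "kernel_op n r1 r2 ker \<psi> = (\<lambda>_. 0)"
proof -
  have "inner_r n r1 \<psi> \<phi> = 0" if "\<phi> \<in> Vr n r1 s" for \<phi>
    using that \<psi> \<open>s > 0\<close> inner_r_commute[of n r1 \<psi> \<phi>] by (simp add: Vr_def)
  moreover have "\<psi> \<in> L2r n r1" using \<psi> Mr_subset_L2r by blast
  ultimately show ?thesis using ok unfolding kernel_ok_def by blast
qed

lemma poly_card_Diff_in_Mr:
  fixes g :: "complex poly"
  assumes dg: "degree g \<le> d" and dr1: "d \<le> r1" and x2: "x2 \<in> Xr n r2"
  shows "(\<lambda>x1. if x1 \<in> Xr n r1 then poly g (of_nat (card (x2 - x1))) else 0) \<in> Mr n r1 d"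
proof -
  note x2D = XrD[OF x2]
  have "degree (pcompose g [:of_nat r2, -1:]) \<le> d" using dg by (simp add: degree_pcompose)
  then obtain a where a: "\<forall>x. poly (pcompose g [:of_nat r2, -1:]) x = (\<Sum>k\<le>d. a k * (x gchoose k))"
    using gbinomial_expansion by blast
  have g_eq: "poly g (of_nat (card (x2 - x1))) = (\<Sum>k\<le>d. a k * of_nat (card (x1 \<inter> x2) choose k))" for x1
  proof -
    have "card (x2 - x1) = r2 - card (x1 \<inter> x2)" and "card (x1 \<inter> x2) \<le> r2"
      using x2D card_mono[OF x2D(2), of "x1 \<inter> x2"] by (auto simp: card_Diff_subset_Int Int_commute)
    then have "(of_nat (card (x2 - x1)) :: complex) = of_nat r2 + of_nat (card (x1 \<inter> x2)) * (-1)"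
      by (simp add: of_nat_diff)
    then show ?thesis using a by (simp add: poly_pcompose binomial_gbinomial)
  qed
  show ?thesis unfolding g_eq by (rule binomial_Int_sum_in_Mr[OF dr1])
qed

lemma poly_eq_0_if_kernel_kills_Mr_lower:
  assumes N: "s \<le> Nfun n r1 r2" and r1n: "r1 \<le> n" and r2n: "r2 \<le> n"
    and s: "s > 0" and dg: "degree g < s"
    and kills: "\<forall>\<psi>\<in>Mr n r1 (s - 1). kernel_op n r1 r2 (\<lambda>k. poly g (of_nat k)) \<psi> = (\<lambda>_. 0)"
  shows "g = 0"
proof -
  obtain x2 where x2: "x2 \<in> Xr n r2"
    using r2n obtain_subset_with_card_n[of r2 "{..<n}"] by (auto simp: Xr_def)
  let ?g = "\<lambda>x1. poly g (of_nat (card (x2 - x1)))"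
  have "(\<lambda>x1. if x1 \<in> Xr n r1 then poly (map_poly cnj g) (of_nat (card (x2 - x1))) else 0)
      \<in> Mr n r1 (s - 1)"
    using N dg x2 by (intro poly_card_Diff_in_Mr) (auto simp: le_Nfun_iff degree_map_poly)
  then have "(\<Sum>x1\<in>Xr n r1. ?g x1 * cnj (?g x1)) = 0"
    using kills x2 by (fastforce simp: kernel_op_def dest: fun_cong[of _ _ x2])
  then have "(\<Sum>x1\<in>Xr n r1. (cmod (?g x1))\<^sup>2) = 0"
    by (simp only: complex_norm_square[symmetric] of_real_sum[symmetric] of_real_eq_0_iff)
  then have roots: "?g x1 = 0" if "x1 \<in> Xr n r1" for x1
    using that by (simp add: sum_nonneg_eq_0_iff finite_Xr)
  show "g = 0"
  proof (rule poly_eq_0_if_nat_roots)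
    show "finite (kdom n r1 r2)" by (simp add: kdom_def)
    show "degree g < card (kdom n r1 r2)" using dg card_kdom_gt[OF N r1n r2n] by simp
    show "\<forall>u\<in>kdom n r1 r2. poly g (of_nat u) = 0"
      using kdom_attained[OF x2 _ r1n] roots by blast
  qed
qed

lemma lambda_poly_formula_unique:
  assumes N: "s \<le> Nfun n r1 r2" and r1n: "r1 \<le> n" and r2n: "r2 \<le> n"
    and dp: "degree p = s" and p0: "poly p 0 = 1"
    and ok: "kernel_ok n r1 r2 s ker" and agree: "\<forall>k\<in>kdom n r1 r2. ker k = poly p (of_nat k)"
  shows "p = lambda_poly_formula n r1 r2 s"
proof -
  let ?P = "lambda_poly_formula n r1 r2 s"
  have sr: "s \<le> r1" "s \<le> n - r1" "s \<le> r2" using N by (simp_all add: le_Nfun_iff)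
  define c where "c = coeff p s / coeff ?P s"
  define g where "g = p - smult c ?P"
  have "coeff g s = 0"
    using coeff_lambda_poly_formula_nonzero[OF sr] by (simp add: g_def c_def)
  moreover have "degree g \<le> s"
    using dp degree_lambda_poly_formula[OF sr] unfolding g_def
    by (intro degree_diff_le) (auto intro: order.trans[OF degree_smult_le])
  ultimately have dg: "g = 0 \<or> degree g < s"
    by (metis le_neq_implies_less leading_coeff_0_iff)
  have "g = 0"
  proof (cases "s = 0")
    case False
    have "kernel_op n r1 r2 (\<lambda>k. poly g (of_nat k)) \<psi> x
        = kernel_op n r1 r2 (\<lambda>k. poly p (of_nat k)) \<psi> x - c * kernel_op n r1 r2 (\<lambda>k. poly ?P (of_nat k)) \<psi> x"
      for \<psi> x
      by (simp add: kernel_op_def g_def algebra_simps sum_subtractf sum_distrib_left)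
    moreover have "kernel_op n r1 r2 (\<lambda>k. poly p (of_nat k)) = kernel_op n r1 r2 ker"
      using agree by (intro kernel_op_kdom_cong) simp
    ultimately have "\<forall>\<psi>\<in>Mr n r1 (s - 1). kernel_op n r1 r2 (\<lambda>k. poly g (of_nat k)) \<psi> = (\<lambda>_. 0)"
      using False kernel_ok_kills_Mr_lower[OF ok] kernel_ok_kills_Mr_lower[OF kernel_ok_lambda_poly_formula[OF sr(1,2)]]
      by auto
    then show ?thesis
      using dg False by (metis degree_0 neq0_conv poly_eq_0_if_kernel_kills_Mr_lower[OF N r1n r2n])
  qed (use dg in simp)
  then have "p = smult c ?P" by (simp add: g_def)
  moreover from this have "c = 1"
    using p0 poly_lambda_poly_formula_0[OF sr(3)] by simp
  ultimately show ?thesis by simp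
qed

lemma lambda_poly_eq_formula:
  assumes "s \<le> Nfun n r1 r2" and "r1 \<le> n" and "r2 \<le> n"
  shows "lambda_poly n r1 r2 s = lambda_poly_formula n r1 r2 s"
  unfolding lambda_poly_def
proof (rule the_equality)
  have sr: "s \<le> r1" "s \<le> n - r1" "s \<le> r2" using assms(1) by (simp_all add: le_Nfun_iff)
  show "degree (lambda_poly_formula n r1 r2 s) = s \<and> poly (lambda_poly_formula n r1 r2 s) 0 = 1 \<and>
    (\<exists>ker. kernel_ok n r1 r2 s ker \<and> (\<forall>k\<in>kdom n r1 r2. ker k = poly (lambda_poly_formula n r1 r2 s) (of_nat k)))"
    using degree_lambda_poly_formula[OF sr] poly_lambda_poly_formula_0[OF sr(3)]
      kernel_ok_lambda_poly_formula[OF sr(1,2)] by blast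
qed (use lambda_poly_formula_unique[OF assms] in blast)

theorem lemma1:
  fixes n r1 r2 s :: nat
  assumes "n \<ge> 1" and "r1 \<le> n" and "r2 \<le> n" and "s \<le> Nfun n r1 r2"
  shows "(\<forall>j\<le>s. lam n r1 s s (of_nat j) =
            (-1) ^ j * pochhammer (of_nat r1 - of_nat s + 1) j / falling (of_nat (n - r1)) j)
       \<and> (\<forall>t::complex. lam n r1 r2 s t =
            inverse (of_nat (r2 choose s)) *
            (\<Sum>j\<le>s. (t gchoose j) * ((of_nat r2 - t) gchoose (s - j)) * lam n r1 s s (of_nat j)))"
proof -
  have "s \<le> Nfun n r1 s" and "s \<le> n" using assms(4) by (auto simp: le_Nfun_iff Nfun_def)
  then have diag: "lam n r1 s s (of_nat j) = lambda_diag n r1 s j" if "j \<le> s" for j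
    using that assms(2)
    by (simp add: lam_def lambda_poly_eq_formula poly_lambda_poly_formula_diag)
  have "lam n r1 r2 s t = inverse (of_nat (r2 choose s)) *
      (\<Sum>j\<le>s. (t gchoose j) * ((of_nat r2 - t) gchoose (s - j)) * lambda_diag n r1 s j)" for t
    using assms by (simp add: lam_def lambda_poly_eq_formula poly_lambda_poly_formula)
  with diag show ?thesis by (simp add: lambda_diag_def)
qed

end
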